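(* Let $D_1,D_2\subset\mathbb{C}^2$ be bounded balanced domains with Minkowski functions $\mu_1,\mu_2$ respectively. For $i=1,2$ let $L_{i,1},L_{i,2},L_{i,3}$ be three pairwise different complex lines through the origin in $\mathbb{C}^2$ (one-dimensional complex linear subspaces). Let $T:\mathbb{C}^2\to\mathbb{C}^2$ be an $\mathbb{R}$-linear map such that $\mu_1(X)=\mu_2(T(X))$ for all $X\in\mathbb{C}^2$ and $T(L_{1,1}\cup L_{1,2}\cup L_{1,3})=L_{2,1}\cup L_{2,2}\cup L_{2,3}$. Then $T$ is $\mathbb{C}$-linear or anti-$\mathbb{C}$-linear.
   Context: A domain $D\subset\mathbb{C}^n$ is balanced if $\lambda z\in D$ for all $z\in D$ and $\lambda\in\mathbb{C}$ with $|\lambda|\le 1$. Its Minkowski function is $\mu(X)=\inf\{t>0: X/t\in D\}$. An $\mathbb{R}$-linear map $T$ is anti-$\mathbb{C}$-linear if $T(\lambda X)=\bar\lambda T(X)$ for all $\lambda\in\mathbb{C}$. *)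

theory Defs
  imports "HOL-Analysis.Analysis"
begin

definition domain :: "(complex ^ 2) set \<Rightarrow> bool" where
  "domain D \<longleftrightarrow> open D \<and> connected D \<and> D \<noteq> {}"

definition balanced :: "(complex ^ 2) set \<Rightarrow> bool" where
  "balanced D \<longleftrightarrow> (\<forall>z\<in>D. \<forall>l::complex. cmod l \<le> 1 \<longrightarrow> l *s z \<in> D)"

definition minkowski :: "(complex ^ 2) set \<Rightarrow> complex ^ 2 \<Rightarrow> real" where
  "minkowski D X = Inf {t::real. t > 0 \<and> (1 / t) *\<^sub>R X \<in> D}"

definition complex_line :: "(complex ^ 2) set \<Rightarrow> bool" where
  "complex_line L \<longleftrightarrow> (\<exists>v. v \<noteq> 0 \<and> L = range (\<lambda>c::complex. c *s v))"

definition complex_linear :: "(complex ^ 2 \<Rightarrow> complex ^ 2) \<Rightarrow> bool" where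
  "complex_linear T \<longleftrightarrow> linear T \<and> (\<forall>(c::complex) X. T (c *s X) = c *s T X)"

definition anti_complex_linear :: "(complex ^ 2 \<Rightarrow> complex ^ 2) \<Rightarrow> bool" where
  "anti_complex_linear T \<longleftrightarrow> linear T \<and> (\<forall>(c::complex) X. T (c *s X) = cnj c *s T X)"

end

theory Submission
  imports Defs
begin

(* The Minkowski functions are positive off the origin and absolutely homogeneous, so T is
   injective and, on each source line C v, turns multiplication by c into a factor of modulus |c|.
   Two of T v, T (i v), T v + T (i v), T v - T (i v) lie on a common target line, which forces
   T (i v) = b T v; comparing Minkowski functions at i v and (1 + i) v gives |b| = 1 and
   |1 + b| = |1 + i|, hence b = i or b = -i: T is C-linear or anti-C-linear on each source line.
   Splitting a nonzero vector of L13 as u1 + u2 with nonzero u1 in L11 and u2 in L12 shows that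
   the signs on L11 and L12 agree (otherwise T u1 or T u2 would vanish); as L11 + L12 = C^2,
   T (i X) = +-i T X for every X. *)

lemma zero_mem_balanced:
  assumes "balanced D" "D \<noteq> {}"
  shows "0 \<in> D"
proof -
  obtain z where "z \<in> D" using assms(2) by blast
  then have "(0::complex) *s z \<in> D"
    using assms(1) unfolding balanced_def by (metis norm_zero zero_le_one)
  then show ?thesis by simp
qed

lemma balanced_unit_smult_iff:
  assumes "balanced D" "cmod u = 1"
  shows "u *s Y \<in> D \<longleftrightarrow> Y \<in> D"
proof
  assume "u *s Y \<in> D"
  then have "cnj u *s (u *s Y) \<in> D"
    using assms unfolding balanced_def by (metis complex_mod_cnj order_refl)
  moreover have "cnj u * u = 1"
    using complex_norm_square[of u] assms(2) by (simp add: mult.commute)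
  ultimately show "Y \<in> D" by (simp add: vector_smult_assoc)
qed (use assms in \<open>simp add: balanced_def\<close>)

lemma minkowski_set_smult:
  assumes "balanced D" "c \<noteq> 0"
  shows "{t. t > 0 \<and> (1/t) *\<^sub>R (c *s X) \<in> D} = (*) (cmod c) ` {t. t > 0 \<and> (1/t) *\<^sub>R X \<in> D}"
proof -
  define u where "u = c / of_real (cmod c)"
  have u: "cmod u = 1" using assms(2) by (simp add: u_def norm_divide)
  have "(1/t) *\<^sub>R (c *s X) = u *s ((1 / (t / cmod c)) *\<^sub>R X)" for t
    using assms(2) unfolding u_def vec_eq_iff vector_scaleR_component vector_smult_component
    by (simp add: scaleR_conv_of_real)
  then have "(1/t) *\<^sub>R (c *s X) \<in> D \<longleftrightarrow> (1 / (t / cmod c)) *\<^sub>R X \<in> D" for t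
    using balanced_unit_smult_iff[OF assms(1) u] by simp
  moreover have pos: "cmod c > 0" using assms(2) by simp
  moreover have "t \<in> (*) (cmod c) ` S \<longleftrightarrow> t / cmod c \<in> S" for t S
    using pos by (auto intro: image_eqI[where x="t / cmod c"])
  ultimately show ?thesis by (auto simp: zero_less_divide_iff)
qed

lemma minkowski_set_nonempty:
  assumes "domain D" "balanced D"
  shows "\<exists>t>0. (1/t) *\<^sub>R X \<in> D"
proof -
  have "0 \<in> D" using assms zero_mem_balanced unfolding domain_def by blast
  then obtain e where e: "e > 0" "ball 0 e \<subseteq> D"
    using assms(1) open_contains_ball unfolding domain_def by blast
  define t where "t = (norm X + 1) / e"
  have "t > 0" using e by (simp add: t_def add_nonneg_pos)
  have "norm ((1/t) *\<^sub>R X) = e * (norm X / (norm X + 1))"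
    using e by (simp add: t_def)
  also have "\<dots> < e"
  proof -
    have "norm X / (norm X + 1) < 1" by (simp add: add_nonneg_pos)
    then show ?thesis using e(1) by (metis mult.right_neutral mult_strict_left_mono)
  qed
  finally show ?thesis using \<open>t > 0\<close> e(2) mem_ball_0 by blast
qed

lemma minkowski_smult:
  assumes "domain D" "balanced D"
  shows "minkowski D (c *s X) = cmod c * minkowski D X"
proof (cases "c = 0")
  case True
  have "0 \<in> D" using assms zero_mem_balanced unfolding domain_def by blast
  then have "{t. t > 0 \<and> (1/t) *\<^sub>R (c *s X) \<in> D} = {0<..}" using True by auto
  then show ?thesis using True by (simp add: minkowski_def)
next
  case False
  let ?S = "{t. t > 0 \<and> (1/t) *\<^sub>R X \<in> D}"
  have "mono (\<lambda>s. cmod c * s)" by (simp add: monoI mult_left_mono)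
  moreover have "continuous (at_right (Inf ?S)) (\<lambda>s. cmod c * s)" by (intro continuous_intros)
  moreover have "?S \<noteq> {}" using minkowski_set_nonempty[OF assms] by auto
  moreover have "bdd_below ?S" by (auto intro: bdd_belowI[where m=0])
  ultimately have "cmod c * Inf ?S = Inf ((*) (cmod c) ` ?S)" by (rule continuous_at_Inf_mono)
  then show ?thesis unfolding minkowski_def minkowski_set_smult[OF assms(2) False] by simp
qed

lemma minkowski_pos:
  assumes "domain D" "balanced D" "bounded D" "X \<noteq> 0"
  shows "minkowski D X > 0"
proof -
  obtain R where R: "R > 0" "\<forall>x\<in>D. norm x \<le> R" using assms(3) bounded_pos by blast
  have "norm X / R \<le> t" if "t > 0" "(1/t) *\<^sub>R X \<in> D" for t
    using R that by (fastforce simp: field_simps)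
  then have "norm X / R \<le> minkowski D X"
    unfolding minkowski_def using minkowski_set_nonempty[OF assms(1,2)] by (intro cInf_greatest) auto
  moreover have "norm X / R > 0" using R assms(4) by simp
  ultimately show ?thesis by linarith
qed

lemma smult_Re_Im: "c *s x = Re c *\<^sub>R x + Im c *\<^sub>R (\<i> *s (x :: complex ^ 'n))"
  unfolding vec_eq_iff vector_add_component vector_scaleR_component vector_smult_component
  by (simp add: scaleR_conv_of_real complex_eq_iff)

lemma linear_smult_if_i_smult:
  fixes T :: "complex ^ 'n \<Rightarrow> complex ^ 'm"
  assumes "linear T" "T (\<i> *s v) = \<i> *s T v"
  shows "T (c *s v) = c *s T v"
  unfolding smult_Re_Im[of c v] smult_Re_Im[of c "T v"]
  using assms by (simp add: linear_add linear_scale)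

lemma linear_smult_cnj_if_minus_i_smult:
  fixes T :: "complex ^ 'n \<Rightarrow> complex ^ 'm"
  assumes "linear T" "T (\<i> *s v) = - \<i> *s T v"
  shows "T (c *s v) = cnj c *s T v"
  unfolding smult_Re_Im[of c v] smult_Re_Im[of "cnj c" "T v"]
  using assms by (simp add: linear_add linear_scale vector_smult_lneg)

lemma i_smult_on_span:
  fixes T :: "complex ^ 'n \<Rightarrow> complex ^ 'm"
  assumes "linear T" "s \<in> {\<i>, - \<i>}" "T (\<i> *s v) = s *s T v"
  shows "T (\<i> *s (a *s v)) = s *s T (a *s v)"
proof -
  from assms(2) consider "s = \<i>" | "s = - \<i>" by blast
  then show ?thesis
  proof cases
    case 1
    then have "T (c *s v) = c *s T v" for c using linear_smult_if_i_smult assms(1,3) by blast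
    then show ?thesis using 1 by (simp add: vector_smult_assoc)
  next
    case 2
    then have "T (c *s v) = cnj c *s T v" for c using linear_smult_cnj_if_minus_i_smult assms(1,3) by blast
    then show ?thesis using 2 by (simp add: vector_smult_assoc)
  qed
qed

lemma i_smult_signs_agree:
  fixes T :: "complex ^ 'n \<Rightarrow> complex ^ 'm"
  assumes "linear T" "s1 \<in> {\<i>, - \<i>}" "s2 \<in> {\<i>, - \<i>}" "s3 \<in> {\<i>, - \<i>}"
    and "T (\<i> *s u1) = s1 *s T u1" "T (\<i> *s u2) = s2 *s T u2"
    and "T (\<i> *s (u1 + u2)) = s3 *s T (u1 + u2)"
    and "T u1 \<noteq> 0" "T u2 \<noteq> 0"
  shows "s1 = s2"
proof (rule ccontr)
  assume "s1 \<noteq> s2"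
  have "s1 *s T u1 + s2 *s T u2 = T (\<i> *s (u1 + u2))"
    using assms(5,6) by (simp only: vector_add_ldistrib linear_add[OF assms(1)])
  also have "\<dots> = s3 *s T u1 + s3 *s T u2"
    using assms(7) by (simp only: linear_add[OF assms(1)] vector_add_ldistrib)
  finally have "s1 *s T u1 + s2 *s T u2 = s3 *s T u1 + s3 *s T u2" .
  moreover have "s3 = s1 \<or> s3 = s2" using assms(2-4) \<open>s1 \<noteq> s2\<close> by fastforce
  ultimately show False using assms(8,9) \<open>s1 \<noteq> s2\<close> by auto
qed

lemma complex_or_anti_linear_if_i_smult:
  assumes "linear T" "s \<in> {\<i>, - \<i>}" "\<And>X. T (\<i> *s X) = s *s T X"
  shows "complex_linear T \<or> anti_complex_linear T"
proof -
  from assms(2) consider "s = \<i>" | "s = - \<i>" by blast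
  then show ?thesis
  proof cases
    case 1
    then have "complex_linear T"
      unfolding complex_linear_def using assms(1,3) linear_smult_if_i_smult by blast
    then show ?thesis ..
  next
    case 2
    then have "anti_complex_linear T"
      unfolding anti_complex_linear_def using assms(1,3) linear_smult_cnj_if_minus_i_smult by blast
    then show ?thesis ..
  qed
qed

lemma complex_line_eq_range:
  assumes "complex_line L" "p \<in> L" "p \<noteq> 0"
  shows "L = range (\<lambda>c. c *s p)"
proof -
  obtain v where L: "L = range (\<lambda>c. c *s v)" using assms(1) unfolding complex_line_def by blast
  then obtain a where p: "p = a *s v" using assms(2) by blast
  then have "a \<noteq> 0" using assms(3) by auto
  have "x \<in> L \<longleftrightarrow> x \<in> range (\<lambda>c. c *s p)" for x
  proof
    assume "x \<in> L"
    then obtain c where "x = c *s v" using L by blast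
    then have "x = (c / a) *s p" using \<open>a \<noteq> 0\<close> by (simp add: p vector_smult_assoc)
    then show "x \<in> range (\<lambda>c. c *s p)" by blast
  next
    assume "x \<in> range (\<lambda>c. c *s p)"
    then obtain c where "x = (c * a) *s v" by (auto simp: p vector_smult_assoc)
    then show "x \<in> L" using L by blast
  qed
  then show ?thesis by blast
qed

lemma complex_lines_eq:
  assumes "complex_line L" "complex_line L'" "p \<in> L" "p \<in> L'" "p \<noteq> 0"
  shows "L = L'"
  using complex_line_eq_range assms by metis

lemma subspace_complex_line: "complex_line L \<Longrightarrow> vec.subspace L"
  unfolding complex_line_def vec.span_singleton[symmetric] by auto

lemma subspace_mem_if_two_of_four:
  fixes p q :: "'a::field_char_0 ^ 'n"
  assumes "vec.subspace S"
    and "(p \<in> S \<and> q \<in> S) \<or> (p \<in> S \<and> p + q \<in> S) \<or> (p \<in> S \<and> p - q \<in> S) \<or>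
         (q \<in> S \<and> p + q \<in> S) \<or> (q \<in> S \<and> p - q \<in> S) \<or> (p + q \<in> S \<and> p - q \<in> S)"
  shows "p \<in> S \<and> q \<in> S"
  using assms(2)
proof (elim disjE conjE)
  assume "p \<in> S" "p + q \<in> S"
  then show ?thesis using vec.subspace_diff[OF assms(1), of "p + q" p] by simp
next
  assume "p \<in> S" "p - q \<in> S"
  then show ?thesis using vec.subspace_diff[OF assms(1), of p "p - q"] by simp
next
  assume "q \<in> S" "p + q \<in> S"
  then show ?thesis using vec.subspace_diff[OF assms(1), of "p + q" q] by simp
next
  assume "q \<in> S" "p - q \<in> S"
  then show ?thesis using vec.subspace_add[OF assms(1), of "p - q" q] by simp
next
  assume "p + q \<in> S" "p - q \<in> S"
  moreover have "p = (1/2) *s ((p + q) + (p - q))" "q = (1/2) *s ((p + q) - (p - q))"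
    by (simp_all add: vec_eq_iff)
  ultimately show ?thesis
    using vec.subspace_add[OF assms(1)] vec.subspace_diff[OF assms(1)] vec.subspace_scale[OF assms(1)]
    by metis
qed simp

lemma smult_collinear_if_four_on_three_lines:
  assumes "complex_line L1" "complex_line L2" "complex_line L3" "p \<noteq> 0"
    and "{p, q, p + q, p - q} \<subseteq> L1 \<union> L2 \<union> L3"
  shows "\<exists>b. q = b *s p"
proof -
  let ?two = "\<lambda>L. (p \<in> L \<and> q \<in> L) \<or> (p \<in> L \<and> p + q \<in> L) \<or> (p \<in> L \<and> p - q \<in> L) \<or>
    (q \<in> L \<and> p + q \<in> L) \<or> (q \<in> L \<and> p - q \<in> L) \<or> (p + q \<in> L \<and> p - q \<in> L)"
  have "?two L1 \<or> ?two L2 \<or> ?two L3" using assms(5) by auto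
  then obtain L where L: "complex_line L" "?two L" using assms(1-3) by blast
  then have "p \<in> L" "q \<in> L" using subspace_mem_if_two_of_four[OF subspace_complex_line] by blast+
  then show ?thesis using complex_line_eq_range[OF L(1) _ assms(4)] by blast
qed

lemma complex_lines_sum:
  assumes "complex_line L1" "complex_line L2" "L1 \<noteq> L2"
  shows "\<exists>u1\<in>L1. \<exists>u2\<in>L2. X = u1 + u2"
proof -
  obtain v1 v2 where v: "v1 \<noteq> 0" "L1 = vec.span {v1}" "v2 \<noteq> 0" "L2 = vec.span {v2}"
    using assms(1,2) unfolding complex_line_def vec.span_singleton by blast
  have "v2 \<notin> L1"
    using complex_lines_eq[OF assms(1,2) _ _ v(3)] assms(3) v(4) vec.span_base by blast
  then have "vec.independent {v2, v1}" "v2 \<noteq> v1"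
    using v(1,2) by (auto simp: vec.independent_insert vec.span_base)
  moreover have "vec.dim (UNIV :: (complex ^ 2) set) = card {v2, v1}"
    using \<open>v2 \<noteq> v1\<close> by (simp add: card_cart_basis)
  ultimately have "X \<in> vec.span ({v1} \<union> {v2})"
    using vec.card_ge_dim_independent[of "{v2, v1}" UNIV] by (auto simp: insert_commute)
  then show ?thesis unfolding vec.span_Un v by blast
qed

lemma complex_line_split_nonzero:
  assumes "complex_line L1" "complex_line L2" "complex_line L3"
    and "L1 \<noteq> L2" "L1 \<noteq> L3" "L2 \<noteq> L3" "w \<in> L3" "w \<noteq> 0"
  shows "\<exists>u1\<in>L1. \<exists>u2\<in>L2. u1 \<noteq> 0 \<and> u2 \<noteq> 0 \<and> w = u1 + u2"
proof -
  obtain u1 u2 where u: "u1 \<in> L1" "u2 \<in> L2" "w = u1 + u2"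
    using complex_lines_sum[OF assms(1,2,4)] by blast
  have "u1 \<noteq> 0"
  proof
    assume "u1 = 0"
    then have "w \<in> L2" using u by simp
    then show False using complex_lines_eq[OF assms(2,3) _ assms(7,8)] assms(6) by blast
  qed
  moreover have "u2 \<noteq> 0"
  proof
    assume "u2 = 0"
    then have "w \<in> L1" using u by simp
    then show False using complex_lines_eq[OF assms(1,3) _ assms(7,8)] assms(5) by blast
  qed
  ultimately show ?thesis using u by blast
qed

lemma minkowski_preserving_nonzero:
  assumes "domain D1" "bounded D1" "balanced D1" "domain D2" "balanced D2"
    and "\<forall>X. minkowski D1 X = minkowski D2 (T X)" "X \<noteq> 0"
  shows "T X \<noteq> 0"
  using minkowski_pos[OF assms(1,3,2,7)] minkowski_smult[OF assms(4,5), of 0] assms(6) by auto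

lemma minkowski_preserving_factor_norm:
  assumes "domain D1" "balanced D1" "domain D2" "balanced D2"
    and "\<forall>X. minkowski D1 X = minkowski D2 (T X)" "minkowski D1 v > 0"
    and "T (c *s v) = b *s T v"
  shows "cmod b = cmod c"
proof -
  have "cmod c * minkowski D1 v = cmod b * minkowski D1 v"
    using minkowski_smult[OF assms(1,2)] minkowski_smult[OF assms(3,4)] assms(5,7) by metis
  then show ?thesis using assms(6) by simp
qed

lemma unimodular_eq_i_or_minus_i:
  assumes "cmod b = 1" "cmod (1 + b) = cmod (1 + \<i>)"
  shows "b = \<i> \<or> b = - \<i>"
proof -
  have "(Re b)\<^sup>2 + (Im b)\<^sup>2 = 1" "(1 + Re b)\<^sup>2 + (Im b)\<^sup>2 = 2"
    using assms cmod_power2[of b] cmod_power2[of "1 + b"] by (simp_all add: cmod_def)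
  then have "Re b = 0" by (simp add: power2_eq_square algebra_simps)
  with \<open>(Re b)\<^sup>2 + (Im b)\<^sup>2 = 1\<close> show ?thesis by (auto simp: complex_eq_iff power2_eq_1_iff)
qed

lemma minkowski_preserving_i_smult_on_line:
  assumes "domain D1" "bounded D1" "balanced D1" "domain D2" "balanced D2"
    and "linear T" "\<forall>X. minkowski D1 X = minkowski D2 (T X)"
    and "complex_line L21" "complex_line L22" "complex_line L23"
    and "complex_line L" "T ` L \<subseteq> L21 \<union> L22 \<union> L23"
  shows "\<exists>s\<in>{\<i>, - \<i>}. \<forall>w\<in>L. T (\<i> *s w) = s *s T w"
proof -
  obtain v where v: "v \<noteq> 0" "L = range (\<lambda>c. c *s v)"
    using assms(11) unfolding complex_line_def by blast
  have pos: "minkowski D1 v > 0" using minkowski_pos[OF assms(1,3,2) v(1)] .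
  have sum: "T ((1 + \<i>) *s v) = T v + T (\<i> *s v)" "T ((1 - \<i>) *s v) = T v - T (\<i> *s v)"
    by (simp_all add: vector_sadd_rdistrib vector_sub_rdistrib
        linear_add[OF assms(6)] linear_diff[OF assms(6)])
  have "T (c *s v) \<in> T ` L" for c using v(2) by blast
  then have "{T v, T (\<i> *s v), T v + T (\<i> *s v), T v - T (\<i> *s v)} \<subseteq> T ` L"
    using sum by (metis empty_subsetI insert_subset vector_smult_lid)
  moreover have "T v \<noteq> 0" using minkowski_preserving_nonzero[OF assms(1-5,7) v(1)] .
  ultimately obtain b where b: "T (\<i> *s v) = b *s T v"
    using smult_collinear_if_four_on_three_lines[OF assms(8-10)] assms(12) by (meson subset_trans)
  have "T ((1 + \<i>) *s v) = (1 + b) *s T v" unfolding sum b by (simp add: vector_sadd_rdistrib)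
  then have "cmod (1 + b) = cmod (1 + \<i>)"
    using minkowski_preserving_factor_norm[OF assms(1,3,4,5,7) pos] by blast
  moreover have "cmod b = 1"
    using minkowski_preserving_factor_norm[OF assms(1,3,4,5,7) pos b] by simp
  ultimately have "b \<in> {\<i>, - \<i>}" using unimodular_eq_i_or_minus_i by blast
  moreover have "\<forall>w\<in>L. T (\<i> *s w) = b *s T w"
    using i_smult_on_span[OF assms(6) \<open>b \<in> {\<i>, - \<i>}\<close> b] v(2) by auto
  ultimately show ?thesis by blast
qed

lemma i_smult_everywhere_if_on_two_lines:
  fixes T :: "complex ^ 2 \<Rightarrow> complex ^ 'm"
  assumes "linear T" "complex_line L1" "complex_line L2" "L1 \<noteq> L2"
    and "\<forall>w\<in>L1. T (\<i> *s w) = s *s T w" "\<forall>w\<in>L2. T (\<i> *s w) = s *s T w"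
  shows "T (\<i> *s X) = s *s T X"
proof -
  obtain u1 u2 where "u1 \<in> L1" "u2 \<in> L2" "X = u1 + u2"
    using complex_lines_sum[OF assms(2-4)] by blast
  then show ?thesis
    using assms(5,6) by (simp add: vector_add_ldistrib linear_add[OF assms(1)])
qed

theorem lemma5:
  fixes D1 D2 :: "(complex ^ 2) set"
    and L11 L12 L13 L21 L22 L23 :: "(complex ^ 2) set"
    and T :: "complex ^ 2 \<Rightarrow> complex ^ 2"
  assumes "domain D1" "bounded D1" "balanced D1"
    and "domain D2" "bounded D2" "balanced D2"
    and "complex_line L11" "complex_line L12" "complex_line L13"
    and "L11 \<noteq> L12" "L11 \<noteq> L13" "L12 \<noteq> L13"
    and "complex_line L21" "complex_line L22" "complex_line L23"
    and "L21 \<noteq> L22" "L21 \<noteq> L23" "L22 \<noteq> L23"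
    and "linear T"
    and "\<forall>X. minkowski D1 X = minkowski D2 (T X)"
    and "T ` (L11 \<union> L12 \<union> L13) = L21 \<union> L22 \<union> L23"
  shows "complex_linear T \<or> anti_complex_linear T"
proof -
  have maps_into: "T ` L11 \<subseteq> L21 \<union> L22 \<union> L23" "T ` L12 \<subseteq> L21 \<union> L22 \<union> L23"
    "T ` L13 \<subseteq> L21 \<union> L22 \<union> L23"
    using assms(21) by blast+
  note on_line = minkowski_preserving_i_smult_on_line[OF assms(1-4,6,19,20,13-15)]
  obtain s1 s2 s3 where s: "s1 \<in> {\<i>, - \<i>}" "s2 \<in> {\<i>, - \<i>}" "s3 \<in> {\<i>, - \<i>}"
    and L11: "\<forall>w\<in>L11. T (\<i> *s w) = s1 *s T w"
    and L12: "\<forall>w\<in>L12. T (\<i> *s w) = s2 *s T w"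
    and L13: "\<forall>w\<in>L13. T (\<i> *s w) = s3 *s T w"
    using on_line[OF assms(7) maps_into(1)] on_line[OF assms(8) maps_into(2)]
      on_line[OF assms(9) maps_into(3)] by blast
  obtain v3 where "v3 \<in> L13" "v3 \<noteq> 0"
    using assms(9) unfolding complex_line_def by (metis rangeI vector_smult_lid)
  then obtain u1 u2 where u: "u1 \<in> L11" "u2 \<in> L12" "u1 \<noteq> 0" "u2 \<noteq> 0" "u1 + u2 \<in> L13"
    using complex_line_split_nonzero[OF assms(7-12)] by metis
  have "s1 = s2"
    using i_smult_signs_agree[OF assms(19) s] L11 L12 L13 u
      minkowski_preserving_nonzero[OF assms(1-4,6,20)] by blast
  then have "T (\<i> *s X) = s1 *s T X" for X
    using i_smult_everywhere_if_on_two_lines[OF assms(19,7,8,10) L11] L12 by blast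
  then show ?thesis using complex_or_anti_linear_if_i_smult[OF assms(19) s(1)] by blast
qed

end
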